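(* In the setting below, suppose the marching-scale functions have the form $u(s,t,q)=l(s)U(t,q)$, $v(s,t,q)=m(s)V(t,q)$, $w(s,t,q)=n(s)W(t,q)$, $x(s,t,q)=p(s)X(t,q)$ with $l,m,n,p,U,V,W,X$ of class $C^1$ and $l(s),m(s),n(s),p(s)\neq0$ for all $s\in[L_1,L_2]$. Then $\mathbf r$ is an isogeodesic of $\mathbf P$ at $(t_0,q_0)$ if and only if $$U(t_0,q_0)=V(t_0,q_0)=W(t_0,q_0)=X(t_0,q_0)=0,\quad \frac{\partial V}{\partial t}(t_0,q_0)=\frac{\partial V}{\partial q}(t_0,q_0)=0,$$ $$\frac{\partial W}{\partial t}(t_0,q_0)\frac{\partial X}{\partial q}(t_0,q_0)-\frac{\partial W}{\partial q}(t_0,q_0)\frac{\partial X}{\partial t}(t_0,q_0)\neq0.$$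
   Context: $\mathbf r:[L_1,L_2]\to\mathbb R^4$ is an arc-length curve with Frenet frame $\{\mathbf T,\mathbf N,\mathbf B_1,\mathbf B_2\}$ (orthonormal, $\mathbf T=\mathbf r'$, $\mathbf T'=k_1\mathbf N$, $\mathbf N'=-k_1\mathbf T+k_2\mathbf B_1$, $\mathbf B_1'=-k_2\mathbf N+k_3\mathbf B_2$, $\mathbf B_2'=-k_3\mathbf B_1$, $k_1>0$), and $\mathbf P(s,t,q)=\mathbf r(s)+u\mathbf T(s)+v\mathbf N(s)+w\mathbf B_1(s)+x\mathbf B_2(s)$ on $[L_1,L_2]\times[T_1,T_2]\times[Q_1,Q_2]$, with $t_0\in[T_1,T_2]$, $q_0\in[Q_1,Q_2]$ fixed. "$\mathbf r$ is an isogeodesic of $\mathbf P$ at $(t_0,q_0)$" means: $\mathbf P(s,t_0,q_0)=\mathbf r(s)$ for all $s$, $\partial_s\mathbf P,\partial_t\mathbf P,\partial_q\mathbf P$ are linearly independent at $(s,t_0,q_0)$, and $\mathbf N(s)$ is parallel to the normal $\partial_s\mathbf P\otimes\partial_t\mathbf P\otimes\partial_q\mathbf P$ (four-dimensional vector product) at $(s,t_0,q_0)$, for all $s$. *)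

theory Defs
  imports "HOL-Analysis.Analysis"
begin

text \<open>Four-dimensional vector product of a, b, c: the unique vector D with
  D \<bullet> y = det(rows y, a, b, c) for all y (cofactor expansion along the first row).\<close>
definition cross4 :: "real^4 \<Rightarrow> real^4 \<Rightarrow> real^4 \<Rightarrow> real^4" where
  "cross4 a b c = (\<chi> i. det ((\<chi> j. if j = 1 then axis i 1 else if j = 2 then a
                                 else if j = 3 then b else c) :: real^4^4))"

definition lin_indep3 :: "real^4 \<Rightarrow> real^4 \<Rightarrow> real^4 \<Rightarrow> bool" where
  "lin_indep3 a b c \<longleftrightarrow>
     (\<forall>\<alpha> \<beta> \<gamma>. \<alpha> *\<^sub>R a + \<beta> *\<^sub>R b + \<gamma> *\<^sub>R c = 0 \<longrightarrow> \<alpha> = 0 \<and> \<beta> = 0 \<and> \<gamma> = 0)"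

definition frenet4 ::
  "(real \<Rightarrow> real^4) \<Rightarrow> (real \<Rightarrow> real^4) \<Rightarrow> (real \<Rightarrow> real^4) \<Rightarrow> (real \<Rightarrow> real^4) \<Rightarrow> (real \<Rightarrow> real^4)
   \<Rightarrow> (real \<Rightarrow> real) \<Rightarrow> (real \<Rightarrow> real) \<Rightarrow> (real \<Rightarrow> real) \<Rightarrow> real \<Rightarrow> real \<Rightarrow> bool" where
  "frenet4 r T N B1 B2 k1 k2 k3 L1 L2 \<longleftrightarrow>
     (\<forall>s\<in>{L1..L2}.
        T s \<bullet> T s = 1 \<and> N s \<bullet> N s = 1 \<and> B1 s \<bullet> B1 s = 1 \<and> B2 s \<bullet> B2 s = 1 \<and>
        T s \<bullet> N s = 0 \<and> T s \<bullet> B1 s = 0 \<and> T s \<bullet> B2 s = 0 \<and>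
        N s \<bullet> B1 s = 0 \<and> N s \<bullet> B2 s = 0 \<and> B1 s \<bullet> B2 s = 0 \<and>
        k1 s > 0 \<and>
        (r has_vector_derivative T s) (at s within {L1..L2}) \<and>
        (T has_vector_derivative (k1 s *\<^sub>R N s)) (at s within {L1..L2}) \<and>
        (N has_vector_derivative (- k1 s *\<^sub>R T s + k2 s *\<^sub>R B1 s)) (at s within {L1..L2}) \<and>
        (B1 has_vector_derivative (- k2 s *\<^sub>R N s + k3 s *\<^sub>R B2 s)) (at s within {L1..L2}) \<and>
        (B2 has_vector_derivative (- k3 s *\<^sub>R B1 s)) (at s within {L1..L2}))"

definition marchP ::
  "(real \<Rightarrow> real^4) \<Rightarrow> (real \<Rightarrow> real^4) \<Rightarrow> (real \<Rightarrow> real^4) \<Rightarrow> (real \<Rightarrow> real^4) \<Rightarrow> (real \<Rightarrow> real^4)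
   \<Rightarrow> (real \<Rightarrow> real \<Rightarrow> real \<Rightarrow> real) \<Rightarrow> (real \<Rightarrow> real \<Rightarrow> real \<Rightarrow> real)
   \<Rightarrow> (real \<Rightarrow> real \<Rightarrow> real \<Rightarrow> real) \<Rightarrow> (real \<Rightarrow> real \<Rightarrow> real \<Rightarrow> real)
   \<Rightarrow> real \<Rightarrow> real \<Rightarrow> real \<Rightarrow> real^4" where
  "marchP r T N B1 B2 u v w x s t q =
     r s + u s t q *\<^sub>R T s + v s t q *\<^sub>R N s + w s t q *\<^sub>R B1 s + x s t q *\<^sub>R B2 s"

definition isogeodesic ::
  "(real \<Rightarrow> real^4) \<Rightarrow> (real \<Rightarrow> real^4) \<Rightarrow> (real \<Rightarrow> real \<Rightarrow> real \<Rightarrow> real^4)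
   \<Rightarrow> real \<Rightarrow> real \<Rightarrow> real \<Rightarrow> real \<Rightarrow> real \<Rightarrow> real \<Rightarrow> real \<Rightarrow> real \<Rightarrow> bool" where
  "isogeodesic r N P L1 L2 T1 T2 Q1 Q2 t0 q0 \<longleftrightarrow>
     (\<forall>s\<in>{L1..L2}.
        P s t0 q0 = r s \<and>
        (let Ps = vector_derivative (\<lambda>s'. P s' t0 q0) (at s within {L1..L2});
             Pt = vector_derivative (\<lambda>t. P s t q0) (at t0 within {T1..T2});
             Pq = vector_derivative (\<lambda>q. P s t0 q) (at q0 within {Q1..Q2})
         in lin_indep3 Ps Pt Pq \<and> (\<exists>c. cross4 Ps Pt Pq = c *\<^sub>R N s)))"

definition C1_on :: "real set \<Rightarrow> (real \<Rightarrow> real) \<Rightarrow> bool" where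
  "C1_on S f \<longleftrightarrow> (\<exists>D. (\<forall>z\<in>S. (f has_field_derivative D z) (at z within S)) \<and> continuous_on S D)"

definition C1_on2 :: "(real \<times> real) set \<Rightarrow> (real \<Rightarrow> real \<Rightarrow> real) \<Rightarrow> bool" where
  "C1_on2 S f \<longleftrightarrow> (\<exists>D :: real \<times> real \<Rightarrow> (real \<times> real) \<Rightarrow>\<^sub>L real.
      (\<forall>z\<in>S. ((\<lambda>y. f (fst y) (snd y)) has_derivative blinfun_apply (D z)) (at z within S))
      \<and> continuous_on S D)"

end

theory Submission
  imports Defs
begin

text \<open>
  Since the Frenet frame is orthonormal and \<open>l, m, n, p\<close> do not vanish, \<open>P(s,t\<^sub>0,q\<^sub>0) = r(s)\<close>
  forces \<open>U = V = W = X = 0\<close> at \<open>(t\<^sub>0,q\<^sub>0)\<close>; then \<open>\<partial>\<^sub>sP = T\<close>, while \<open>\<partial>\<^sub>tP\<close> and \<open>\<partial>\<^sub>qP\<close> have frame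
  coordinates \<open>(l U\<^sub>t, m V\<^sub>t, n W\<^sub>t, p X\<^sub>t)\<close> and \<open>(l U\<^sub>q, m V\<^sub>q, n W\<^sub>q, p X\<^sub>q)\<close>.
  The vector product of \<open>T, \<partial>\<^sub>tP, \<partial>\<^sub>qP\<close> has no \<open>T\<close>-component, and its \<open>B\<^sub>1\<close>- and \<open>B\<^sub>2\<close>-components
  are the \<open>2\<times>2\<close> minors pairing the \<open>N\<close>-coordinates with the \<open>B\<^sub>2\<close>- resp. \<open>B\<^sub>1\<close>-coordinates.
  So it is parallel to \<open>N\<close> iff these minors vanish, while linear independence of the triple
  means that some minor of the last three coordinates is nonzero; together this leaves exactly
  \<open>V\<^sub>t = V\<^sub>q = 0\<close> and \<open>W\<^sub>t X\<^sub>q - W\<^sub>q X\<^sub>t \<noteq> 0\<close>.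
\<close>

lemma pair_independent_iff_minors:
  fixes b c d b' c' d' :: real
  shows "(\<forall>\<beta> \<gamma>. \<beta>*b + \<gamma>*b' = 0 \<and> \<beta>*c + \<gamma>*c' = 0 \<and> \<beta>*d + \<gamma>*d' = 0 \<longrightarrow> \<beta> = 0 \<and> \<gamma> = 0)
     \<longleftrightarrow> b*c' \<noteq> c*b' \<or> b*d' \<noteq> d*b' \<or> c*d' \<noteq> d*c'"
proof
  assume indep: "\<forall>\<beta> \<gamma>. \<beta>*b + \<gamma>*b' = 0 \<and> \<beta>*c + \<gamma>*c' = 0 \<and> \<beta>*d + \<gamma>*d' = 0 \<longrightarrow> \<beta> = 0 \<and> \<gamma> = 0"
  show "b*c' \<noteq> c*b' \<or> b*d' \<noteq> d*b' \<or> c*d' \<noteq> d*c'"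
  proof (rule ccontr)
    assume "\<not> ?thesis"
    then have minors: "b*c' = c*b'" "b*d' = d*b'" "c*d' = d*c'" by auto
    \<comment> \<open>\<open>(x', -x)\<close> is a nontrivial relation for any coordinate x \<noteq> 0 of the first vector\<close>
    have "b = 0 \<and> c = 0 \<and> d = 0"
      using indep[rule_format, of b' "-b"] indep[rule_format, of c' "-c"] indep[rule_format, of d' "-d"]
        minors by (auto simp: algebra_simps)
    then show False using indep[rule_format, of 1 0] by simp
  qed
next
  assume minor: "b*c' \<noteq> c*b' \<or> b*d' \<noteq> d*b' \<or> c*d' \<noteq> d*c'"
  show "\<forall>\<beta> \<gamma>. \<beta>*b + \<gamma>*b' = 0 \<and> \<beta>*c + \<gamma>*c' = 0 \<and> \<beta>*d + \<gamma>*d' = 0 \<longrightarrow> \<beta> = 0 \<and> \<gamma> = 0"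
  proof (intro allI impI)
    fix \<beta> \<gamma>
    assume eqs: "\<beta>*b + \<gamma>*b' = 0 \<and> \<beta>*c + \<gamma>*c' = 0 \<and> \<beta>*d + \<gamma>*d' = 0"
    have "\<beta> * (b*c' - c*b') = (\<beta>*b + \<gamma>*b')*c' - (\<beta>*c + \<gamma>*c')*b'"
      "\<beta> * (b*d' - d*b') = (\<beta>*b + \<gamma>*b')*d' - (\<beta>*d + \<gamma>*d')*b'"
      "\<beta> * (c*d' - d*c') = (\<beta>*c + \<gamma>*c')*d' - (\<beta>*d + \<gamma>*d')*c'"
      "\<gamma> * (b*c' - c*b') = (\<beta>*c + \<gamma>*c')*b - (\<beta>*b + \<gamma>*b')*c"
      "\<gamma> * (b*d' - d*b') = (\<beta>*d + \<gamma>*d')*b - (\<beta>*b + \<gamma>*b')*d"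
      "\<gamma> * (c*d' - d*c') = (\<beta>*d + \<gamma>*d')*c - (\<beta>*c + \<gamma>*c')*d"
      by (simp_all add: algebra_simps)
    then show "\<beta> = 0 \<and> \<gamma> = 0"
      using eqs minor by auto
  qed
qed

lemma det_4:
  "det (A::'a::comm_ring_1^4^4) =
   A$1$1*A$2$2*A$3$3*A$4$4 - A$1$1*A$2$2*A$3$4*A$4$3 - A$1$1*A$2$3*A$3$2*A$4$4
 + A$1$1*A$2$3*A$3$4*A$4$2 + A$1$1*A$2$4*A$3$2*A$4$3 - A$1$1*A$2$4*A$3$3*A$4$2
 - A$1$2*A$2$1*A$3$3*A$4$4 + A$1$2*A$2$1*A$3$4*A$4$3 + A$1$2*A$2$3*A$3$1*A$4$4
 - A$1$2*A$2$3*A$3$4*A$4$1 - A$1$2*A$2$4*A$3$1*A$4$3 + A$1$2*A$2$4*A$3$3*A$4$1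
 + A$1$3*A$2$1*A$3$2*A$4$4 - A$1$3*A$2$1*A$3$4*A$4$2 - A$1$3*A$2$2*A$3$1*A$4$4
 + A$1$3*A$2$2*A$3$4*A$4$1 + A$1$3*A$2$4*A$3$1*A$4$2 - A$1$3*A$2$4*A$3$2*A$4$1
 - A$1$4*A$2$1*A$3$2*A$4$3 + A$1$4*A$2$1*A$3$3*A$4$2 + A$1$4*A$2$2*A$3$1*A$4$3
 - A$1$4*A$2$2*A$3$3*A$4$1 - A$1$4*A$2$3*A$3$1*A$4$2 + A$1$4*A$2$3*A$3$2*A$4$1"
proof -
  have "finite {2::4, 3, 4}" "1 \<notin> {2::4, 3, 4}"
    and "finite {3::4, 4}" "2 \<notin> {3::4, 4}"
    and "finite {4::4}" "3 \<notin> {4::4}"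
    by auto
  then show ?thesis
    unfolding det_def UNIV_4
    by (simp add: sum_over_permutations_insert permutes_sing sign_swap_id permutation_swap_id
        sign_compose permutation_compose sign_id swap_id_eq algebra_simps)
qed

definition orthonormal4 :: "real^4 \<Rightarrow> real^4 \<Rightarrow> real^4 \<Rightarrow> real^4 \<Rightarrow> bool" where
  "orthonormal4 e1 e2 e3 e4 \<longleftrightarrow>
     e1 \<bullet> e1 = 1 \<and> e2 \<bullet> e2 = 1 \<and> e3 \<bullet> e3 = 1 \<and> e4 \<bullet> e4 = 1 \<and>
     e1 \<bullet> e2 = 0 \<and> e1 \<bullet> e3 = 0 \<and> e1 \<bullet> e4 = 0 \<and> e2 \<bullet> e3 = 0 \<and> e2 \<bullet> e4 = 0 \<and> e3 \<bullet> e4 = 0"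

lemma orthonormal4_inner:
  assumes "orthonormal4 e1 e2 e3 e4"
  shows "e1 \<bullet> e1 = 1" "e2 \<bullet> e2 = 1" "e3 \<bullet> e3 = 1" "e4 \<bullet> e4 = 1"
    "e1 \<bullet> e2 = 0" "e1 \<bullet> e3 = 0" "e1 \<bullet> e4 = 0" "e2 \<bullet> e3 = 0" "e2 \<bullet> e4 = 0" "e3 \<bullet> e4 = 0"
    "e2 \<bullet> e1 = 0" "e3 \<bullet> e1 = 0" "e4 \<bullet> e1 = 0" "e3 \<bullet> e2 = 0" "e4 \<bullet> e2 = 0" "e4 \<bullet> e3 = 0"
  using assms by (simp_all add: orthonormal4_def inner_commute)

lemma orthonormal4_combination_eq_0_iff:
  assumes "orthonormal4 e1 e2 e3 e4"
  shows "a1 *\<^sub>R e1 + a2 *\<^sub>R e2 + a3 *\<^sub>R e3 + a4 *\<^sub>R e4 = 0 \<longleftrightarrow> a1 = 0 \<and> a2 = 0 \<and> a3 = 0 \<and> a4 = 0"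
proof
  assume "a1 *\<^sub>R e1 + a2 *\<^sub>R e2 + a3 *\<^sub>R e3 + a4 *\<^sub>R e4 = 0"
  then have "(a1 *\<^sub>R e1 + a2 *\<^sub>R e2 + a3 *\<^sub>R e3 + a4 *\<^sub>R e4) \<bullet> e = 0" for e
    by simp
  from this[of e1] this[of e2] this[of e3] this[of e4]
  show "a1 = 0 \<and> a2 = 0 \<and> a3 = 0 \<and> a4 = 0"
    by (simp add: inner_add_left orthonormal4_inner[OF assms])
qed simp

definition frame_matrix :: "real^4 \<Rightarrow> real^4 \<Rightarrow> real^4 \<Rightarrow> real^4 \<Rightarrow> real^4^4" where
  "frame_matrix e1 e2 e3 e4 = (\<chi> i. if i = 1 then e1 else if i = 2 then e2 else if i = 3 then e3 else e4)"

lemma frame_matrix_rows [simp]: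
  "frame_matrix e1 e2 e3 e4 $ 1 = e1" "frame_matrix e1 e2 e3 e4 $ 2 = e2"
  "frame_matrix e1 e2 e3 e4 $ 3 = e3" "frame_matrix e1 e2 e3 e4 $ 4 = e4"
  by (simp_all add: frame_matrix_def)

lemma mult_transpose_component: "((A::real^'n^'m) ** transpose B) $ i $ j = A$i \<bullet> B$j"
  by (simp add: matrix_matrix_mult_def transpose_def inner_vec_def mult.commute)

lemma orthogonal_matrix_frame_matrix:
  assumes "orthonormal4 e1 e2 e3 e4"
  shows "orthogonal_matrix (frame_matrix e1 e2 e3 e4)"
proof -
  have "frame_matrix e1 e2 e3 e4 ** transpose (frame_matrix e1 e2 e3 e4) = mat 1"
    by (simp add: vec_eq_iff forall_4 mult_transpose_component orthonormal4_inner[OF assms] mat_def)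
  then show ?thesis
    by (simp add: orthogonal_matrix_def matrix_left_right_inverse)
qed

lemma orthonormal4_expansion:
  assumes "orthonormal4 e1 e2 e3 e4"
  shows "y = (y \<bullet> e1) *\<^sub>R e1 + (y \<bullet> e2) *\<^sub>R e2 + (y \<bullet> e3) *\<^sub>R e3 + (y \<bullet> e4) *\<^sub>R e4"
proof -
  let ?F = "frame_matrix e1 e2 e3 e4"
  have "y = (transpose ?F ** ?F) *v y"
    using orthogonal_matrix_frame_matrix[OF assms] by (simp add: orthogonal_matrix_def)
  also have "\<dots> = transpose ?F *v (?F *v y)"
    by (simp add: matrix_vector_mul_assoc)
  also have "\<dots> = (y \<bullet> e1) *\<^sub>R e1 + (y \<bullet> e2) *\<^sub>R e2 + (y \<bullet> e3) *\<^sub>R e3 + (y \<bullet> e4) *\<^sub>R e4"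
    by (simp add: vec_eq_iff matrix_vector_mult_def transpose_def sum_4 inner_vec_def algebra_simps)
  finally show ?thesis .
qed

lemma cross4_inner:
  "cross4 a b c \<bullet> y =
     det ((\<chi> i. if i = 1 then y else if i = 2 then a else if i = 3 then b else c) :: real^4^4)"
  by (simp add: cross4_def inner_vec_def sum_4 det_4 axis_def algebra_simps)

lemma cross4_inner_first: "cross4 a b c \<bullet> a = 0"
  unfolding cross4_inner by (rule det_identical_rows[of 1 2]) (simp_all add: row_def vec_eq_iff)

lemma cross4_inner_mult_det:
  "(cross4 a b c \<bullet> y) * det F =
     det (\<chi> i j. (if i = 1 then y else if i = 2 then a else if i = 3 then b else c) \<bullet> F$j)"
proof -
  let ?R = "(\<chi> i. if i = 1 then y else if i = 2 then a else if i = 3 then b else c) :: real^4^4"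
  have "?R ** transpose F = (\<chi> i j. (if i = 1 then y else if i = 2 then a else if i = 3 then b else c) \<bullet> F$j)"
    by (simp add: vec_eq_iff mult_transpose_component)
  then show ?thesis
    using det_mul[of ?R "transpose F"] by (simp add: cross4_inner)
qed

lemma cross4_frame_coordinates:
  fixes a b c d a' b' c' d' :: real
  assumes o: "orthonormal4 e1 e2 e3 e4"
  defines "F \<equiv> frame_matrix e1 e2 e3 e4"
    and "Pt \<equiv> a *\<^sub>R e1 + b *\<^sub>R e2 + c *\<^sub>R e3 + d *\<^sub>R e4"
    and "Pq \<equiv> a' *\<^sub>R e1 + b' *\<^sub>R e2 + c' *\<^sub>R e3 + d' *\<^sub>R e4"
  shows "(cross4 e1 Pt Pq \<bullet> e3) * det F = b * d' - d * b'"
    and "(cross4 e1 Pt Pq \<bullet> e4) * det F = c * b' - b * c'"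
  unfolding cross4_inner_mult_det
  by (simp_all add: det_4 F_def Pt_def Pq_def inner_add_left orthonormal4_inner[OF o])

lemma cross4_parallel_frame_iff:
  fixes a b c d a' b' c' d' :: real
  assumes o: "orthonormal4 e1 e2 e3 e4"
  defines "Pt \<equiv> a *\<^sub>R e1 + b *\<^sub>R e2 + c *\<^sub>R e3 + d *\<^sub>R e4"
    and "Pq \<equiv> a' *\<^sub>R e1 + b' *\<^sub>R e2 + c' *\<^sub>R e3 + d' *\<^sub>R e4"
  shows "(\<exists>k. cross4 e1 Pt Pq = k *\<^sub>R e2) \<longleftrightarrow> b * d' = d * b' \<and> c * b' = b * c'"
proof -
  let ?D = "cross4 e1 Pt Pq"
  have "det (frame_matrix e1 e2 e3 e4) \<noteq> 0"
    using det_orthogonal_matrix[OF orthogonal_matrix_frame_matrix[OF o]] by auto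
  then have "?D \<bullet> e3 = 0 \<and> ?D \<bullet> e4 = 0 \<longleftrightarrow> b * d' = d * b' \<and> c * b' = b * c'"
    using cross4_frame_coordinates[OF o, of a b c d a' b' c' d'] unfolding Pt_def Pq_def
    by (metis eq_iff_diff_eq_0 mult_eq_0_iff)
  moreover have "(\<exists>k. ?D = k *\<^sub>R e2) \<longleftrightarrow> ?D \<bullet> e3 = 0 \<and> ?D \<bullet> e4 = 0"
  proof
    assume "?D \<bullet> e3 = 0 \<and> ?D \<bullet> e4 = 0"
    then have "?D = (?D \<bullet> e2) *\<^sub>R e2"
      using orthonormal4_expansion[OF o, of ?D] cross4_inner_first[of e1 Pt Pq] by simp
    then show "\<exists>k. ?D = k *\<^sub>R e2" ..
  qed (auto simp: orthonormal4_inner[OF o])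
  ultimately show ?thesis by simp
qed

lemma lin_indep3_frame_iff:
  fixes a b c d a' b' c' d' :: real
  assumes o: "orthonormal4 e1 e2 e3 e4"
  defines "Pt \<equiv> a *\<^sub>R e1 + b *\<^sub>R e2 + c *\<^sub>R e3 + d *\<^sub>R e4"
    and "Pq \<equiv> a' *\<^sub>R e1 + b' *\<^sub>R e2 + c' *\<^sub>R e3 + d' *\<^sub>R e4"
  shows "lin_indep3 e1 Pt Pq \<longleftrightarrow> b * c' \<noteq> c * b' \<or> b * d' \<noteq> d * b' \<or> c * d' \<noteq> d * c'"
proof -
  have "\<alpha> *\<^sub>R e1 + \<beta> *\<^sub>R Pt + \<gamma> *\<^sub>R Pq =
      (\<alpha> + \<beta>*a + \<gamma>*a') *\<^sub>R e1 + (\<beta>*b + \<gamma>*b') *\<^sub>R e2 + (\<beta>*c + \<gamma>*c') *\<^sub>R e3 + (\<beta>*d + \<gamma>*d') *\<^sub>R e4"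
    for \<alpha> \<beta> \<gamma>
    by (simp add: Pt_def Pq_def algebra_simps)
  then have "lin_indep3 e1 Pt Pq \<longleftrightarrow>
      (\<forall>\<alpha> \<beta> \<gamma>. \<alpha> + \<beta>*a + \<gamma>*a' = 0 \<and> \<beta>*b + \<gamma>*b' = 0 \<and> \<beta>*c + \<gamma>*c' = 0 \<and> \<beta>*d + \<gamma>*d' = 0
         \<longrightarrow> \<alpha> = 0 \<and> \<beta> = 0 \<and> \<gamma> = 0)"
    by (simp add: lin_indep3_def orthonormal4_combination_eq_0_iff[OF o])
  also have "\<dots> \<longleftrightarrow> (\<forall>\<beta> \<gamma>. \<beta>*b + \<gamma>*b' = 0 \<and> \<beta>*c + \<gamma>*c' = 0 \<and> \<beta>*d + \<gamma>*d' = 0 \<longrightarrow> \<beta> = 0 \<and> \<gamma> = 0)"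
  proof (intro iffI allI impI)
    fix \<beta> \<gamma>
    assume H: "\<forall>\<alpha> \<beta> \<gamma>. \<alpha> + \<beta>*a + \<gamma>*a' = 0 \<and> \<beta>*b + \<gamma>*b' = 0 \<and> \<beta>*c + \<gamma>*c' = 0 \<and> \<beta>*d + \<gamma>*d' = 0
         \<longrightarrow> \<alpha> = 0 \<and> \<beta> = 0 \<and> \<gamma> = 0"
      and eqs: "\<beta>*b + \<gamma>*b' = 0 \<and> \<beta>*c + \<gamma>*c' = 0 \<and> \<beta>*d + \<gamma>*d' = 0"
    have "- (\<beta>*a + \<gamma>*a') + \<beta>*a + \<gamma>*a' = 0"
      by simp
    with eqs show "\<beta> = 0 \<and> \<gamma> = 0"
      using H by blast
  next
    fix \<alpha> \<beta> \<gamma>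
    assume H: "\<forall>\<beta> \<gamma>. \<beta>*b + \<gamma>*b' = 0 \<and> \<beta>*c + \<gamma>*c' = 0 \<and> \<beta>*d + \<gamma>*d' = 0 \<longrightarrow> \<beta> = 0 \<and> \<gamma> = 0"
      and eqs: "\<alpha> + \<beta>*a + \<gamma>*a' = 0 \<and> \<beta>*b + \<gamma>*b' = 0 \<and> \<beta>*c + \<gamma>*c' = 0 \<and> \<beta>*d + \<gamma>*d' = 0"
    then have "\<beta> = 0 \<and> \<gamma> = 0"
      by blast
    with eqs show "\<alpha> = 0 \<and> \<beta> = 0 \<and> \<gamma> = 0"
      by simp
  qed
  finally show ?thesis
    unfolding pair_independent_iff_minors .
qed

lemma isogeodesic_frame_condition_iff:
  fixes a b c d a' b' c' d' :: real
  assumes o: "orthonormal4 e1 e2 e3 e4"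
  defines "Pt \<equiv> a *\<^sub>R e1 + b *\<^sub>R e2 + c *\<^sub>R e3 + d *\<^sub>R e4"
    and "Pq \<equiv> a' *\<^sub>R e1 + b' *\<^sub>R e2 + c' *\<^sub>R e3 + d' *\<^sub>R e4"
  shows "lin_indep3 e1 Pt Pq \<and> (\<exists>k. cross4 e1 Pt Pq = k *\<^sub>R e2) \<longleftrightarrow>
           b = 0 \<and> b' = 0 \<and> c * d' - d * c' \<noteq> 0"
proof -
  have "b * (c * d' - d * c') = c * (b * d' - d * b') + d * (c * b' - b * c')"
    "b' * (c * d' - d * c') = d' * (c * b' - b * c') + c' * (b * d' - d * b')"
    by (simp_all add: algebra_simps)
  then show ?thesis
    unfolding Pt_def Pq_def lin_indep3_frame_iff[OF o] cross4_parallel_frame_iff[OF o]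
  proof (intro iffI)
    assume "(b * c' \<noteq> c * b' \<or> b * d' \<noteq> d * b' \<or> c * d' \<noteq> d * c') \<and>
        b * d' = d * b' \<and> c * b' = b * c'"
    then have minors: "c * d' - d * c' \<noteq> 0" "b * d' - d * b' = 0" "c * b' - b * c' = 0"
      by (auto simp: mult.commute)
    with \<open>b * (c * d' - d * c') = _\<close> \<open>b' * (c * d' - d * c') = _\<close>
    have "b * (c * d' - d * c') = 0" "b' * (c * d' - d * c') = 0"
      by (simp_all only: mult_zero_right add_0_right)
    with minors show "b = 0 \<and> b' = 0 \<and> c * d' - d * c' \<noteq> 0"
      by simp
  qed auto
qed

lemma has_field_derivative_restrict_C1_on2:
  assumes "C1_on2 S f" "(\<gamma> has_derivative \<gamma>') (at x within A)" "\<gamma> ` A \<subseteq> S" "\<gamma> x \<in> S"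
  shows "((\<lambda>y. f (fst (\<gamma> y)) (snd (\<gamma> y))) has_field_derivative
           vector_derivative (\<lambda>y. f (fst (\<gamma> y)) (snd (\<gamma> y))) (at x within A)) (at x within A)"
proof -
  obtain D where "((\<lambda>y. f (fst y) (snd y)) has_derivative D) (at (\<gamma> x) within S)"
    using assms(1,4) unfolding C1_on2_def by blast
  then have "((\<lambda>y. f (fst y) (snd y)) \<circ> \<gamma> has_derivative D \<circ> \<gamma>') (at x within A)"
    using diff_chain_within[OF assms(2) has_derivative_subset[OF _ assms(3)]] by blast
  then have "(\<lambda>y. f (fst (\<gamma> y)) (snd (\<gamma> y))) differentiable (at x within A)"
    unfolding differentiable_def o_def by blast
  then show ?thesis
    using vector_derivative_works has_real_derivative_iff_has_vector_derivative by blast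
qed

lemma C1_on2_has_derivative_first:
  assumes "C1_on2 (A \<times> B) f" "t \<in> A" "q \<in> B"
  shows "((\<lambda>t. f t q) has_field_derivative vector_derivative (\<lambda>t. f t q) (at t within A)) (at t within A)"
proof -
  have "((\<lambda>t. (t, q)) has_derivative (\<lambda>h. (h, 0))) (at t within A)"
    by (auto intro!: derivative_eq_intros)
  from has_field_derivative_restrict_C1_on2[OF assms(1) this] assms show ?thesis
    by auto
qed

lemma C1_on2_has_derivative_second:
  assumes "C1_on2 (A \<times> B) f" "t \<in> A" "q \<in> B"
  shows "((\<lambda>q. f t q) has_field_derivative vector_derivative (\<lambda>q. f t q) (at q within B)) (at q within B)"
proof -
  have "((\<lambda>q. (t, q)) has_derivative (\<lambda>h. (0, h))) (at q within B)"
    by (auto intro!: derivative_eq_intros)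
  from has_field_derivative_restrict_C1_on2[OF assms(1) this] assms show ?thesis
    by auto
qed

lemma vector_derivative_frame_combination:
  fixes r0 e1 e2 e3 e4 :: "real^4"
  assumes "a < b" "x \<in> {a..b}"
    and "(f1 has_field_derivative d1) (at x within {a..b})" "(f2 has_field_derivative d2) (at x within {a..b})"
      "(f3 has_field_derivative d3) (at x within {a..b})" "(f4 has_field_derivative d4) (at x within {a..b})"
  shows "vector_derivative
           (\<lambda>t. r0 + (c1 * f1 t) *\<^sub>R e1 + (c2 * f2 t) *\<^sub>R e2 + (c3 * f3 t) *\<^sub>R e3 + (c4 * f4 t) *\<^sub>R e4)
           (at x within {a..b})
         = (c1 * d1) *\<^sub>R e1 + (c2 * d2) *\<^sub>R e2 + (c3 * d3) *\<^sub>R e3 + (c4 * d4) *\<^sub>R e4"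
proof -
  have "((\<lambda>t. r0 + (c1 * f1 t) *\<^sub>R e1 + (c2 * f2 t) *\<^sub>R e2 + (c3 * f3 t) *\<^sub>R e3 + (c4 * f4 t) *\<^sub>R e4)
      has_vector_derivative 0 + ((c1 * f1 x) *\<^sub>R 0 + (c1 * d1) *\<^sub>R e1) + ((c2 * f2 x) *\<^sub>R 0 + (c2 * d2) *\<^sub>R e2)
        + ((c3 * f3 x) *\<^sub>R 0 + (c3 * d3) *\<^sub>R e3) + ((c4 * f4 x) *\<^sub>R 0 + (c4 * d4) *\<^sub>R e4))
      (at x within {a..b})"
    by (intro has_vector_derivative_add has_vector_derivative_scaleR has_vector_derivative_const
        DERIV_cmult assms(3-6))
  then show ?thesis
    by (simp add: vector_derivative_within_closed_interval[OF assms(1,2)])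
qed

lemma frenet4_orthonormal4:
  assumes "frenet4 r T N B1 B2 k1 k2 k3 L1 L2" "s \<in> {L1..L2}"
  shows "orthonormal4 (T s) (N s) (B1 s) (B2 s)"
  using assms by (simp add: frenet4_def orthonormal4_def)

lemma frenet4_tangent:
  assumes "frenet4 r T N B1 B2 k1 k2 k3 L1 L2" "s \<in> {L1..L2}"
  shows "(r has_vector_derivative T s) (at s within {L1..L2})"
  using assms by (simp add: frenet4_def)

lemma marchP_eq_curve_iff:
  assumes "orthonormal4 (T s) (N s) (B1 s) (B2 s)"
  shows "marchP r T N B1 B2 u v w x s t q = r s \<longleftrightarrow>
           u s t q = 0 \<and> v s t q = 0 \<and> w s t q = 0 \<and> x s t q = 0"
  using orthonormal4_combination_eq_0_iff[OF assms] by (simp add: marchP_def add.assoc)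

lemma isogeodesic_point_separable_iff:
  fixes r T N B1 B2 :: "real \<Rightarrow> real^4" and l m n p :: "real \<Rightarrow> real"
    and U V W X :: "real \<Rightarrow> real \<Rightarrow> real"
  assumes "L1 < L2" "T1 < T2" "Q1 < Q2" "s \<in> {L1..L2}" "t0 \<in> {T1..T2}" "q0 \<in> {Q1..Q2}"
    and frame: "orthonormal4 (T s) (N s) (B1 s) (B2 s)"
    and tangent: "(r has_vector_derivative T s) (at s within {L1..L2})"
    and nonzero: "l s \<noteq> 0 \<and> m s \<noteq> 0 \<and> n s \<noteq> 0 \<and> p s \<noteq> 0"
    and derivs_t:
      "((\<lambda>t. U t q0) has_field_derivative Ut) (at t0 within {T1..T2})"
      "((\<lambda>t. V t q0) has_field_derivative Vt) (at t0 within {T1..T2})"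
      "((\<lambda>t. W t q0) has_field_derivative Wt) (at t0 within {T1..T2})"
      "((\<lambda>t. X t q0) has_field_derivative Xt) (at t0 within {T1..T2})"
    and derivs_q:
      "((\<lambda>q. U t0 q) has_field_derivative Uq) (at q0 within {Q1..Q2})"
      "((\<lambda>q. V t0 q) has_field_derivative Vq) (at q0 within {Q1..Q2})"
      "((\<lambda>q. W t0 q) has_field_derivative Wq) (at q0 within {Q1..Q2})"
      "((\<lambda>q. X t0 q) has_field_derivative Xq) (at q0 within {Q1..Q2})"
  defines "P \<equiv> marchP r T N B1 B2 (\<lambda>s t q. l s * U t q) (\<lambda>s t q. m s * V t q)
                                    (\<lambda>s t q. n s * W t q) (\<lambda>s t q. p s * X t q)"
  shows "(P s t0 q0 = r s \<and>
          (let Ps = vector_derivative (\<lambda>s'. P s' t0 q0) (at s within {L1..L2});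
               Pt = vector_derivative (\<lambda>t. P s t q0) (at t0 within {T1..T2});
               Pq = vector_derivative (\<lambda>q. P s t0 q) (at q0 within {Q1..Q2})
           in lin_indep3 Ps Pt Pq \<and> (\<exists>c. cross4 Ps Pt Pq = c *\<^sub>R N s)))
         \<longleftrightarrow> U t0 q0 = 0 \<and> V t0 q0 = 0 \<and> W t0 q0 = 0 \<and> X t0 q0 = 0 \<and>
             Vt = 0 \<and> Vq = 0 \<and> Wt * Xq - Wq * Xt \<noteq> 0"
proof -
  have on_curve: "P s t0 q0 = r s \<longleftrightarrow> U t0 q0 = 0 \<and> V t0 q0 = 0 \<and> W t0 q0 = 0 \<and> X t0 q0 = 0"
    using frame nonzero by (simp add: P_def marchP_eq_curve_iff)
  have Pt: "vector_derivative (\<lambda>t. P s t q0) (at t0 within {T1..T2}) =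
      (l s * Ut) *\<^sub>R T s + (m s * Vt) *\<^sub>R N s + (n s * Wt) *\<^sub>R B1 s + (p s * Xt) *\<^sub>R B2 s"
    unfolding P_def marchP_def by (rule vector_derivative_frame_combination[OF assms(2,5) derivs_t])
  have Pq: "vector_derivative (\<lambda>q. P s t0 q) (at q0 within {Q1..Q2}) =
      (l s * Uq) *\<^sub>R T s + (m s * Vq) *\<^sub>R N s + (n s * Wq) *\<^sub>R B1 s + (p s * Xq) *\<^sub>R B2 s"
    unfolding P_def marchP_def by (rule vector_derivative_frame_combination[OF assms(3,6) derivs_q])
  show ?thesis
  proof (cases "U t0 q0 = 0 \<and> V t0 q0 = 0 \<and> W t0 q0 = 0 \<and> X t0 q0 = 0")
    case True
    then have "(\<lambda>s'. P s' t0 q0) = r"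
      by (simp add: P_def marchP_def)
    then have Ps: "vector_derivative (\<lambda>s'. P s' t0 q0) (at s within {L1..L2}) = T s"
      using vector_derivative_within_closed_interval[OF assms(1,4) tangent] by simp
    have "(n s * Wt) * (p s * Xq) - (p s * Xt) * (n s * Wq) = (n s * p s) * (Wt * Xq - Wq * Xt)"
      by (simp add: algebra_simps)
    then show ?thesis
      unfolding Let_def Ps Pt Pq isogeodesic_frame_condition_iff[OF frame]
      using True on_curve nonzero by simp
  qed (use on_curve in auto)
qed

lemma isogeodesic_iff_pointwise:
  assumes "L1 \<le> L2"
    and "\<And>s. s \<in> {L1..L2} \<Longrightarrow>
      (P s t0 q0 = r s \<and>
        (let Ps = vector_derivative (\<lambda>s'. P s' t0 q0) (at s within {L1..L2});
             Pt = vector_derivative (\<lambda>t. P s t q0) (at t0 within {T1..T2});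
             Pq = vector_derivative (\<lambda>q. P s t0 q) (at q0 within {Q1..Q2})
         in lin_indep3 Ps Pt Pq \<and> (\<exists>c. cross4 Ps Pt Pq = c *\<^sub>R N s))) \<longleftrightarrow> R"
  shows "isogeodesic r N P L1 L2 T1 T2 Q1 Q2 t0 q0 \<longleftrightarrow> R"
  using assms unfolding isogeodesic_def by (metis atLeastAtMost_iff order_refl)

theorem mainTheorem2:
  fixes r T N B1 B2 :: "real \<Rightarrow> real^4"
    and k1 k2 k3 l m n p :: "real \<Rightarrow> real"
    and U V W X :: "real \<Rightarrow> real \<Rightarrow> real"
    and L1 L2 T1 T2 Q1 Q2 t0 q0 :: real
  assumes "L1 < L2" "T1 < T2" "Q1 < Q2"
    and "t0 \<in> {T1..T2}" "q0 \<in> {Q1..Q2}"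
    and "frenet4 r T N B1 B2 k1 k2 k3 L1 L2"
    and "C1_on {L1..L2} l" "C1_on {L1..L2} m" "C1_on {L1..L2} n" "C1_on {L1..L2} p"
    and "C1_on2 ({T1..T2} \<times> {Q1..Q2}) U" "C1_on2 ({T1..T2} \<times> {Q1..Q2}) V"
        "C1_on2 ({T1..T2} \<times> {Q1..Q2}) W" "C1_on2 ({T1..T2} \<times> {Q1..Q2}) X"
    and "\<forall>s\<in>{L1..L2}. l s \<noteq> 0 \<and> m s \<noteq> 0 \<and> n s \<noteq> 0 \<and> p s \<noteq> 0"
  shows "isogeodesic r N
           (marchP r T N B1 B2 (\<lambda>s t q. l s * U t q) (\<lambda>s t q. m s * V t q)
                               (\<lambda>s t q. n s * W t q) (\<lambda>s t q. p s * X t q))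
           L1 L2 T1 T2 Q1 Q2 t0 q0
         \<longleftrightarrow>
         (U t0 q0 = 0 \<and> V t0 q0 = 0 \<and> W t0 q0 = 0 \<and> X t0 q0 = 0 \<and>
          vector_derivative (\<lambda>t. V t q0) (at t0 within {T1..T2}) = 0 \<and>
          vector_derivative (\<lambda>q. V t0 q) (at q0 within {Q1..Q2}) = 0 \<and>
          vector_derivative (\<lambda>t. W t q0) (at t0 within {T1..T2})
            * vector_derivative (\<lambda>q. X t0 q) (at q0 within {Q1..Q2})
          - vector_derivative (\<lambda>q. W t0 q) (at q0 within {Q1..Q2})
            * vector_derivative (\<lambda>t. X t q0) (at t0 within {T1..T2}) \<noteq> 0)"
proof (intro isogeodesic_iff_pointwise isogeodesic_point_separable_iff)
  fix s
  assume "s \<in> {L1..L2}"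
  with assms show "orthonormal4 (T s) (N s) (B1 s) (B2 s)"
    and "(r has_vector_derivative T s) (at s within {L1..L2})"
    and "l s \<noteq> 0 \<and> m s \<noteq> 0 \<and> n s \<noteq> 0 \<and> p s \<noteq> 0"
    by (simp_all add: frenet4_orthonormal4 frenet4_tangent)
qed (use assms in \<open>auto intro: C1_on2_has_derivative_first C1_on2_has_derivative_second\<close>)

end
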